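(* For every $n\ge 0$, all finite multisets $\Gamma,\Delta$ of compound diagrams and every compound diagram $D$: (i) if $\vdash_n\Gamma\Rightarrow\Delta$ then $\vdash_n D,\Gamma\Rightarrow\Delta$; (ii) if $\vdash_n\Gamma\Rightarrow\Delta$ then $\vdash_n\Gamma\Rightarrow\Delta,D$.
   Context: Fix a countably infinite set $\mathcal V$ of propositional variables. Zones: for a finite set $L\subset\mathcal V$ (contours), a zone over $L$ is a pair $z=(\mathrm{in}(z),\mathrm{out}(z))$ of disjoint subsets of $L$ with union $L$; $\mathcal Z(L)$ is the set of all zones over $L$. Unitary diagrams are of three syntactically distinct kinds. (i) Venn diagram $d=(L,\mathcal Z(L),S)$, $S=S(d)\subseteq\mathcal Z(L)$ the shaded zones. Special Venn diagrams: $\bot=(\emptyset,\{(\emptyset,\emptyset)\},\emptyset)$, $\top=(\emptyset,\{(\emptyset,\emptyset)\},\{(\emptyset,\emptyset)\})$, the positive literal $P_c=(\{c\},\mathcal Z(\{c\}),\{(\{c\},\emptyset)\})$ and negative literal $N_c=(\{c\},\mathcal Z(\{c\}),\{(\emptyset,\{c\})\})$ for $c\in\mathcal V$. (ii) Pure Euler diagram $d=(L,Z)$, $Z\subseteq\mathcal Z(L)$ the visible zones, $M(d)=\mathcal Z(L)\setminus Z$ the missing zones. (iii) Euler–Venn diagram $d=(L,Z,S)$ with $Z\subseteq\mathcal Z(L)$, $S\subseteq Z$; $E(d)=(L,Z)$ (pure Euler), $V(d)=(L,\mathcal Z(L),S)$ (Venn). Compound diagrams: $D::=d\mid D\wedge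 D\mid D\vee D\mid D\to D$ ($d$ unitary). For $c\in L$, $\mathrm{adj}(z,c)$ is the zone obtained from $z$ by moving $c$ from $\mathrm{out}(z)$ to $\mathrm{in}(z)$ or from $\mathrm{in}(z)$ to $\mathrm{out}(z)$. Reduction: $z\setminus c=(\mathrm{in}(z)\setminus\{c\},\mathrm{out}(z)\setminus\{c\})$, and for a pure Euler $d=(L,Z)$, $d\setminus c=(L\setminus\{c\},\{z\setminus c:z\in Z\})$ (pure Euler). A sequent $\Gamma\Rightarrow\Delta$ consists of finite multisets of compound diagrams. The calculus $\mathbf C$ (premisses / conclusion; $\Gamma,\Delta$ arbitrary multisets, $D,E$ compound diagrams): Zero-premiss rules: axiom $P_c,\Gamma\Rightarrow\Delta,P_c$; $(\bot L)$ $\bot,\Gamma\Rightarrow\Delta$; $(\top R)$ $\Gamma\Rightarrow\Delta,\top$. $(\wedge L)$ $D,E,\Gamma\Rightarrow\Delta$ / $D\wedge E,\Gamma\Rightarrow\Delta$. $(\vee L)$ $D,\Gamma\Rightarrow\Delta$ and $E,\Gamma\Rightarrow\Delta$ / $D\vee E,\Gamma\Rightarrow\Delta$. $(\to L)$ $D\to E,\Gamma\Rightarrow D$ and $E,\Gamma\Rightarrow\Delta$ / $D\to E,\Gamma\Rightarrow\Delta$. $(\wedge R)$ $\Gamma\Rightarrow\Delta,D$ and $\Gamma\Rightarrow\Delta,E$ / $\Gamma\Rightarrow\Delta,D\wedge E$. $(\vee R)$ $\Gamma\Rightarrow\Delta,D,E$ / $\Gamma\Rightarrow\Delta,D\vee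 E$. $(\to R)$ $D,\Gamma\Rightarrow E$ / $\Gamma\Rightarrow\Delta,D\to E$. $(\mathrm{lit}L)$ $N_c,\Gamma\Rightarrow P_c$ / $N_c,\Gamma\Rightarrow\Delta$. $(\mathrm{lit}R)$ $P_c,\Gamma\Rightarrow$ (empty succedent) / $\Gamma\Rightarrow\Delta,N_c$. For a Venn $d=(L,\mathcal Z(L),S)$ with $|S|>1$ and $d_i=(L,\mathcal Z(L),S_i)$, $S_1\cup S_2=S$: $(\mathrm{sep}L)$ $d_1,\Gamma\Rightarrow\Delta$ and $d_2,\Gamma\Rightarrow\Delta$ / $d,\Gamma\Rightarrow\Delta$; $(\mathrm{sep}R)$ $\Gamma\Rightarrow\Delta,d_1,d_2$ / $\Gamma\Rightarrow\Delta,d$. For a Venn $d$ with $S(d)=\{z\}$, $z=(\{n_1,\dots,n_k\},\{o_1,\dots,o_l\})$: $(\mathrm{dec}L)$ $P_{n_1},\dots,P_{n_k},N_{o_1},\dots,N_{o_l},\Gamma\Rightarrow\Delta$ / $d,\Gamma\Rightarrow\Delta$; $(\mathrm{dec}R)$ $\Gamma\Rightarrow\Delta,P_{n_i}$ ($1\le i\le k$) and $\Gamma\Rightarrow\Delta,N_{o_j}$ ($1\le j\le l$) / $\Gamma\Rightarrow\Delta,d$. For a pure Euler $d=(L,Z)$ such that every $z\in M(d)$ has some $\ell\in L$ with $\mathrm{adj}(z,\ell)\in M(d)$, and $\{c_1,\dots,c_k\}\subseteq L$ the maximal set of contours with $M(d\setminus c_i)\neq\emptyset$: $(\mathrm{red}L)$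 $d\setminus c_1,\dots,d\setminus c_k,\Gamma\Rightarrow\Delta$ / $d,\Gamma\Rightarrow\Delta$; $(\mathrm{red}R)$ $\Gamma\Rightarrow\Delta,d\setminus c_i$ ($1\le i\le k$) / $\Gamma\Rightarrow\Delta,d$. For a pure Euler $d=(L,Z)$ with $|M(d)|>1$ and pure Euler $d_1=(L,Z_1)$, $d_2=(L,Z_2)$ with $Z_1\cap Z_2=Z$: $(\mathrm{mzsep}L)$ $d_1,d_2,\Gamma\Rightarrow\Delta$ / $d,\Gamma\Rightarrow\Delta$; $(\mathrm{mzsep}R)$ $\Gamma\Rightarrow\Delta,d_1$ and $\Gamma\Rightarrow\Delta,d_2$ / $\Gamma\Rightarrow\Delta,d$. For a pure Euler $d$ with $M(d)=\{z\}$, $z=(\{n_1,\dots,n_k\},\{o_1,\dots,o_l\})$: $(\mathrm{impdec}L)$ $d,\Gamma\Rightarrow P_{n_i}$ ($1\le i\le k$) and $P_{o_j},\Gamma\Rightarrow\Delta$ ($1\le j\le l$) / $d,\Gamma\Rightarrow\Delta$; $(\mathrm{impdec}R)$ $P_{n_1},\dots,P_{n_k},\Gamma\Rightarrow P_{o_1},\dots,P_{o_l}$ / $\Gamma\Rightarrow\Delta,d$. For an Euler–Venn $d$: $(\mathrm{det}L)$ $d,\Gamma\Rightarrow E(d)$ and $V(d),\Gamma\Rightarrow\Delta$ / $d,\Gamma\Rightarrow\Delta$; $(\mathrm{det}R)$ $E(d),\Gamma\Rightarrow V(d)$ / $\Gamma\Rightarrow\Delta,d$. A proof of a sequent is a finite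 tree of rule instances with that sequent at the root and all leaves instances of zero-premiss rules. Its height is the largest number of successive rule applications along a branch (so a single zero-premiss instance has height $0$). $\vdash_n\Gamma\Rightarrow\Delta$ means that $\Gamma\Rightarrow\Delta$ has a proof of height at most $n$. *)

theory Defs
  imports Main "HOL-Library.Multiset"
begin

text \<open>Propositional variables (contours): the countably infinite set nat.\<close>

type_synonym zone = "nat set \<times> nat set"   (* (in z, out z) *)

definition zones :: "nat set \<Rightarrow> zone set" where
  "zones L = {z. fst z \<inter> snd z = {} \<and> fst z \<union> snd z = L}"

text \<open>Unitary diagrams. Venn L S stands for the Venn diagram (L, zones L, S);
  Euler L Z is the pure Euler diagram (L, Z); EulerVenn L Z S is (L, Z, S).\<close>
datatype unitary =
    Venn "nat set" "zone set"
  | Euler "nat set" "zone set"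
  | EulerVenn "nat set" "zone set" "zone set"

fun wf_unitary :: "unitary \<Rightarrow> bool" where
  "wf_unitary (Venn L S) = (finite L \<and> S \<subseteq> zones L)"
| "wf_unitary (Euler L Z) = (finite L \<and> Z \<subseteq> zones L)"
| "wf_unitary (EulerVenn L Z S) = (finite L \<and> Z \<subseteq> zones L \<and> S \<subseteq> Z)"

datatype diag =
    U unitary
  | Conj diag diag
  | Disj diag diag
  | Imp diag diag

fun wf_diag :: "diag \<Rightarrow> bool" where
  "wf_diag (U d) = wf_unitary d"
| "wf_diag (Conj D E) = (wf_diag D \<and> wf_diag E)"
| "wf_diag (Disj D E) = (wf_diag D \<and> wf_diag E)"
| "wf_diag (Imp D E) = (wf_diag D \<and> wf_diag E)"

definition BotD :: unitary where "BotD = Venn {} {}"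
definition TopD :: unitary where "TopD = Venn {} {({}, {})}"
definition Pos :: "nat \<Rightarrow> unitary" where "Pos c = Venn {c} {({c}, {})}"
definition Neg :: "nat \<Rightarrow> unitary" where "Neg c = Venn {c} {({}, {c})}"

definition adj :: "zone \<Rightarrow> nat \<Rightarrow> zone" where
  "adj z c = (if c \<in> fst z then (fst z - {c}, snd z \<union> {c}) else (fst z \<union> {c}, snd z - {c}))"

definition zred :: "zone \<Rightarrow> nat \<Rightarrow> zone" where
  "zred z c = (fst z - {c}, snd z - {c})"

definition missing :: "nat set \<Rightarrow> zone set \<Rightarrow> zone set" where
  "missing L Z = zones L - Z"

definition ered_L :: "nat set \<Rightarrow> nat \<Rightarrow> nat set" where
  "ered_L L c = L - {c}"

definition ered_Z :: "zone set \<Rightarrow> nat \<Rightarrow> zone set" where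
  "ered_Z Z c = (\<lambda>z. zred z c) ` Z"

definition red_contours :: "nat set \<Rightarrow> zone set \<Rightarrow> nat set" where
  "red_contours L Z = {c \<in> L. missing (ered_L L c) (ered_Z Z c) \<noteq> {}}"

definition posm :: "nat set \<Rightarrow> diag multiset" where
  "posm A = image_mset (\<lambda>c. U (Pos c)) (mset_set A)"

definition negm :: "nat set \<Rightarrow> diag multiset" where
  "negm A = image_mset (\<lambda>c. U (Neg c)) (mset_set A)"

text \<open>prov n \<Gamma> \<Delta>: the sequent \<Gamma> \<Rightarrow> \<Delta> has a proof in C of height at most n.\<close>
inductive prov :: "nat \<Rightarrow> diag multiset \<Rightarrow> diag multiset \<Rightarrow> bool" where
  ax: "prov n (add_mset (U (Pos c)) \<Gamma>) (add_mset (U (Pos c)) \<Delta>)"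
| botL: "prov n (add_mset (U BotD) \<Gamma>) \<Delta>"
| topR: "prov n \<Gamma> (add_mset (U TopD) \<Delta>)"
| conjL: "prov n (add_mset D (add_mset E \<Gamma>)) \<Delta> \<Longrightarrow> prov (Suc n) (add_mset (Conj D E) \<Gamma>) \<Delta>"
| disjL: "prov n (add_mset D \<Gamma>) \<Delta> \<Longrightarrow> prov n (add_mset E \<Gamma>) \<Delta> \<Longrightarrow>
          prov (Suc n) (add_mset (Disj D E) \<Gamma>) \<Delta>"
| impL: "prov n (add_mset (Imp D E) \<Gamma>) {#D#} \<Longrightarrow> prov n (add_mset E \<Gamma>) \<Delta> \<Longrightarrow>
          prov (Suc n) (add_mset (Imp D E) \<Gamma>) \<Delta>"
| conjR: "prov n \<Gamma> (add_mset D \<Delta>) \<Longrightarrow> prov n \<Gamma> (add_mset E \<Delta>) \<Longrightarrow>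
          prov (Suc n) \<Gamma> (add_mset (Conj D E) \<Delta>)"
| disjR: "prov n \<Gamma> (add_mset D (add_mset E \<Delta>)) \<Longrightarrow> prov (Suc n) \<Gamma> (add_mset (Disj D E) \<Delta>)"
| impR: "prov n (add_mset D \<Gamma>) {#E#} \<Longrightarrow> prov (Suc n) \<Gamma> (add_mset (Imp D E) \<Delta>)"
| litL: "prov n (add_mset (U (Neg c)) \<Gamma>) {#U (Pos c)#} \<Longrightarrow> prov (Suc n) (add_mset (U (Neg c)) \<Gamma>) \<Delta>"
| litR: "prov n (add_mset (U (Pos c)) \<Gamma>) {#} \<Longrightarrow> prov (Suc n) \<Gamma> (add_mset (U (Neg c)) \<Delta>)"
| sepL: "\<lbrakk>wf_unitary (Venn L S); card S > 1; S1 \<union> S2 = S;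
          prov n (add_mset (U (Venn L S1)) \<Gamma>) \<Delta>; prov n (add_mset (U (Venn L S2)) \<Gamma>) \<Delta>\<rbrakk>
         \<Longrightarrow> prov (Suc n) (add_mset (U (Venn L S)) \<Gamma>) \<Delta>"
| sepR: "\<lbrakk>wf_unitary (Venn L S); card S > 1; S1 \<union> S2 = S;
          prov n \<Gamma> (add_mset (U (Venn L S1)) (add_mset (U (Venn L S2)) \<Delta>))\<rbrakk>
         \<Longrightarrow> prov (Suc n) \<Gamma> (add_mset (U (Venn L S)) \<Delta>)"
| decL: "\<lbrakk>wf_unitary (Venn L {z});
          prov n (posm (fst z) + negm (snd z) + \<Gamma>) \<Delta>\<rbrakk>
         \<Longrightarrow> prov (Suc n) (add_mset (U (Venn L {z})) \<Gamma>) \<Delta>"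
| decR: "\<lbrakk>wf_unitary (Venn L {z});
          \<forall>c\<in>fst z. prov n \<Gamma> (add_mset (U (Pos c)) \<Delta>);
          \<forall>c\<in>snd z. prov n \<Gamma> (add_mset (U (Neg c)) \<Delta>)\<rbrakk>
         \<Longrightarrow> prov (Suc n) \<Gamma> (add_mset (U (Venn L {z})) \<Delta>)"
| redL: "\<lbrakk>wf_unitary (Euler L Z);
          \<forall>z\<in>missing L Z. \<exists>l\<in>L. adj z l \<in> missing L Z;
          prov n (image_mset (\<lambda>c. U (Euler (ered_L L c) (ered_Z Z c))) (mset_set (red_contours L Z)) + \<Gamma>) \<Delta>\<rbrakk>
         \<Longrightarrow> prov (Suc n) (add_mset (U (Euler L Z)) \<Gamma>) \<Delta>"
| redR: "\<lbrakk>wf_unitary (Euler L Z);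
          \<forall>z\<in>missing L Z. \<exists>l\<in>L. adj z l \<in> missing L Z;
          \<forall>c\<in>red_contours L Z. prov n \<Gamma> (add_mset (U (Euler (ered_L L c) (ered_Z Z c))) \<Delta>)\<rbrakk>
         \<Longrightarrow> prov (Suc n) \<Gamma> (add_mset (U (Euler L Z)) \<Delta>)"
| mzsepL: "\<lbrakk>wf_unitary (Euler L Z); card (missing L Z) > 1;
          Z1 \<subseteq> zones L; Z2 \<subseteq> zones L; Z1 \<inter> Z2 = Z;
          prov n (add_mset (U (Euler L Z1)) (add_mset (U (Euler L Z2)) \<Gamma>)) \<Delta>\<rbrakk>
         \<Longrightarrow> prov (Suc n) (add_mset (U (Euler L Z)) \<Gamma>) \<Delta>"
| mzsepR: "\<lbrakk>wf_unitary (Euler L Z); card (missing L Z) > 1;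
          Z1 \<subseteq> zones L; Z2 \<subseteq> zones L; Z1 \<inter> Z2 = Z;
          prov n \<Gamma> (add_mset (U (Euler L Z1)) \<Delta>); prov n \<Gamma> (add_mset (U (Euler L Z2)) \<Delta>)\<rbrakk>
         \<Longrightarrow> prov (Suc n) \<Gamma> (add_mset (U (Euler L Z)) \<Delta>)"
| impdecL: "\<lbrakk>wf_unitary (Euler L Z); missing L Z = {z};
          \<forall>c\<in>fst z. prov n (add_mset (U (Euler L Z)) \<Gamma>) {#U (Pos c)#};
          \<forall>c\<in>snd z. prov n (add_mset (U (Pos c)) \<Gamma>) \<Delta>\<rbrakk>
         \<Longrightarrow> prov (Suc n) (add_mset (U (Euler L Z)) \<Gamma>) \<Delta>"
| impdecR: "\<lbrakk>wf_unitary (Euler L Z); missing L Z = {z};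
          prov n (posm (fst z) + \<Gamma>) (posm (snd z))\<rbrakk>
         \<Longrightarrow> prov (Suc n) \<Gamma> (add_mset (U (Euler L Z)) \<Delta>)"
| detL: "\<lbrakk>wf_unitary (EulerVenn L Z S);
          prov n (add_mset (U (EulerVenn L Z S)) \<Gamma>) {#U (Euler L Z)#};
          prov n (add_mset (U (Venn L S)) \<Gamma>) \<Delta>\<rbrakk>
         \<Longrightarrow> prov (Suc n) (add_mset (U (EulerVenn L Z S)) \<Gamma>) \<Delta>"
| detR: "\<lbrakk>wf_unitary (EulerVenn L Z S);
          prov n (add_mset (U (Euler L Z)) \<Gamma>) {#U (Venn L S)#}\<rbrakk>
         \<Longrightarrow> prov (Suc n) \<Gamma> (add_mset (U (EulerVenn L Z S)) \<Delta>)"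

end

theory Submission
  imports Defs
begin

text \<open>Every rule of the calculus has arbitrary side contexts \<Gamma>, \<Delta> in its conclusion, so extra
  formulas can be carried through each premiss; the premisses whose succedent is fixed
  (as in the rules for \<open>\<rightarrow>\<close>, literals and impdec) simply do not receive them.\<close>

lemma prov_weaken: "prov n \<Gamma> \<Delta> \<Longrightarrow> prov n (\<Gamma>' + \<Gamma>) (\<Delta>' + \<Delta>)"
proof (induction arbitrary: \<Delta>' rule: prov.induct)
  case ax then show ?case by (simp add: prov.ax)
next
  case botL then show ?case by (simp add: prov.botL)
next
  case topR then show ?case by (simp add: prov.topR)
next
  case conjL then show ?case by (simp add: prov.conjL)
next
  case disjL then show ?case by (simp add: prov.disjL)
next
  case (impL n D E \<Gamma> \<Delta>)
  then show ?case using prov.impL[of n D E "\<Gamma>' + \<Gamma>"] by fastforce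
next
  case conjR then show ?case by (simp add: prov.conjR)
next
  case disjR then show ?case by (simp add: prov.disjR)
next
  case impR then show ?case by (simp add: prov.impR)
next
  case litL then show ?case by (simp add: prov.litL)
next
  case litR then show ?case by (simp add: prov.litR)
next
  case sepL then show ?case by (simp add: prov.sepL)
next
  case sepR then show ?case by (simp add: prov.sepR)
next
  case (decL L z n \<Gamma> \<Delta>)
  then show ?case
    using prov.decL[of L z n "\<Gamma>' + \<Gamma>" "\<Delta>' + \<Delta>"] by (simp add: ac_simps)
next
  case decR then show ?case by (simp add: prov.decR)
next
  case (redL L Z n \<Gamma> \<Delta>)
  then show ?case
    using prov.redL[of L Z n "\<Gamma>' + \<Gamma>" "\<Delta>' + \<Delta>"] by (simp add: ac_simps)
next
  case redR then show ?case by (simp add: prov.redR)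
next
  case mzsepL then show ?case by (simp add: prov.mzsepL)
next
  case mzsepR then show ?case by (simp add: prov.mzsepR)
next
  case impdecL then show ?case by (simp add: prov.impdecL)
next
  case (impdecR L Z z n \<Gamma> \<Delta>)
  have "prov n (posm (fst z) + (\<Gamma>' + \<Gamma>)) (posm (snd z))"
    using impdecR.IH[of "{#}"] by (simp add: add.left_commute)
  from prov.impdecR[OF impdecR.hyps(1,2) this, of "\<Delta>' + \<Delta>"] show ?case
    by simp
next
  case detL then show ?case by (simp add: prov.detL)
next
  case detR then show ?case by (simp add: prov.detR)
qed

theorem lemma13:
  fixes n :: nat and \<Gamma> \<Delta> :: "diag multiset" and D :: diag
  assumes "wf_diag D" and "\<forall>E\<in>#\<Gamma>. wf_diag E" and "\<forall>E\<in>#\<Delta>. wf_diag E"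
  shows "(prov n \<Gamma> \<Delta> \<longrightarrow> prov n (add_mset D \<Gamma>) \<Delta>) \<and>
         (prov n \<Gamma> \<Delta> \<longrightarrow> prov n \<Gamma> (add_mset D \<Delta>))"
  using prov_weaken[of n \<Gamma> \<Delta> "{#D#}" "{#}"] prov_weaken[of n \<Gamma> \<Delta> "{#}" "{#D#}"] by simp

end
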